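(* Let $d\ge 1$ and let $\mathcal{F}$ be a class of real-valued integrable functions on $[0,1]^d$; for $f\in\mathcal{F}$ write $\mu(f)=\int_{[0,1]^d} f(\boldsymbol{x})\,\mathrm{d}\boldsymbol{x}$. Let $\alpha>1$ and $0<m\le M<\infty$. Suppose that $\mathcal{F}$ has a superlinear root mean square lower bound, namely for every $n\ge 1$ and every choice of random points $\boldsymbol{x}_1,\dots,\boldsymbol{x}_n\in[0,1]^d$ (with arbitrary joint distribution), $$\sup_{f\in\mathcal{F}}\mathbb{E}\biggl(\biggl|\frac1n\sum_{i=1}^n f(\boldsymbol{x}_i)-\mu(f)\biggr|^2\biggr)^{1/2}> m n^{-\alpha},$$ where $\mathbb{E}$ denotes expectation over the randomness of the points. Suppose further that there is an infinite sequence of random points $\boldsymbol{x}_1,\boldsymbol{x}_2,\dots\in[0,1]^d$ (with arbitrary joint distribution; no unbiasedness or correlation assumptions) and a strictly increasing sequence of positive integers $n_1<n_2<\cdots$ such that $$\sup_{f\in\mathcal{F}}\mathbb{E}\biggl(\biggl|\frac1n\sum_{i=1}^n f(\boldsymbol{x}_i)-\mu(f)\biggr|^2\biggr)^{1/2}\le M n^{-\alpha}\quad\text{for all } n\in\{n_1,n_2,\dots\}.$$ Then for every $k\ge1$, the ratio $\rho=\rho_k=n_{k+1}/n_k$ satisfies $$\rho \ge 1 + \biggl[\frac{m}{M}\bigl(1+\rho^{1-\alpha}\bigr)^{-1}\biggr]^{1/(\alpha-1)} \ge 1 + \Bigl(\frac{m}{2M}\Bigr)^{1/(\alpha-1)}.$$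 *)

theory Defs
  imports "HOL-Probability.Probability"
begin

definition unit_cube :: "(real ^ 'd) set" where
  "unit_cube = cbox 0 1"

definition cube_mean :: "(real ^ 'd \<Rightarrow> real) \<Rightarrow> real" where
  "cube_mean f = (LINT x:unit_cube|lborel. f x)"

definition ennsqrt :: "ennreal \<Rightarrow> ennreal" where
  "ennsqrt e = (if e = top then top else ennreal (sqrt (enn2real e)))"

definition rmse :: "'w measure \<Rightarrow> ('w \<Rightarrow> nat \<Rightarrow> real ^ 'd) \<Rightarrow> nat \<Rightarrow> (real ^ 'd \<Rightarrow> real) \<Rightarrow> ennreal" where
  "rmse Q X n f =
     ennsqrt (\<integral>\<^sup>+ w. ennreal ((1 / real n * (\<Sum>i<n. f (X w i)) - cube_mean f)\<^sup>2) \<partial>Q)"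

definition worst_rmse :: "'w measure \<Rightarrow> ('w \<Rightarrow> nat \<Rightarrow> real ^ 'd) \<Rightarrow> nat \<Rightarrow> (real ^ 'd \<Rightarrow> real) set \<Rightarrow> ennreal" where
  "worst_rmse Q X n F = (SUP f\<in>F. rmse Q X n f)"

end

theory Submission
  imports Defs
begin

text \<open>For n < n', the points with indices n, ..., n' - 1 form an equal weight rule with
  N = n' - n points. Its error, multiplied by N, is the difference of the errors of the first
  n' and the first n points, each multiplied by the number of points; so by Minkowski's
  inequality in L2 its RMSE is at most (M n powr (1 - \<alpha>) + M n' powr (1 - \<alpha>)) / N.
  The lower bound, applied to the law of these N points, says that this RMSE exceeds
  m N powr - \<alpha>. Dividing by n powr (1 - \<alpha>) gives
  m (\<rho> - 1) powr (1 - \<alpha>) < M (1 + \<rho> powr (1 - \<alpha>)) for \<rho> = n' / n, which is the claim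
  solved for \<rho> - 1; the weaker bound uses \<rho> powr (1 - \<alpha>) \<le> 1.\<close>

lemma ennsqrt_le_ennreal_iff:
  assumes "0 \<le> c"
  shows "ennsqrt e \<le> ennreal c \<longleftrightarrow> e \<le> ennreal (c\<^sup>2)"
proof (cases "e = top")
  case True
  then show ?thesis by (simp add: ennsqrt_def top_unique)
next
  case False
  then obtain r where "0 \<le> r" "e = ennreal r" by (cases e) auto
  then show ?thesis
    using assms by (simp add: ennsqrt_def real_sqrt_le_iff')
qed

lemma power2_diff_le_weighted:
  fixes x y t :: real
  assumes "0 < t"
  shows "(x - y)\<^sup>2 \<le> (1 + t) * x\<^sup>2 + (1 + 1 / t) * y\<^sup>2"
proof -
  have "(1 + t) * x\<^sup>2 + (1 + 1 / t) * y\<^sup>2 - (x - y)\<^sup>2 = (t * x + y)\<^sup>2 / t"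
    using assms by (simp add: power2_eq_square field_simps)
  moreover have "0 \<le> (t * x + y)\<^sup>2 / t" using assms by simp
  ultimately show ?thesis by linarith
qed

text \<open>Minkowski's inequality in L2, for bounds; the weight t = b / a is the optimal one.\<close>
lemma nn_integral_power2_diff_le:
  fixes u v :: "'a \<Rightarrow> real"
  assumes [measurable]: "u \<in> borel_measurable M" "v \<in> borel_measurable M"
    and "0 < a" "0 < b"
    and u: "(\<integral>\<^sup>+x. ennreal ((u x)\<^sup>2) \<partial>M) \<le> ennreal (a\<^sup>2)"
    and v: "(\<integral>\<^sup>+x. ennreal ((v x)\<^sup>2) \<partial>M) \<le> ennreal (b\<^sup>2)"
  shows "(\<integral>\<^sup>+x. ennreal ((u x - v x)\<^sup>2) \<partial>M) \<le> ennreal ((a + b)\<^sup>2)"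
proof -
  define t where "t = b / a"
  have t: "0 < t" using assms by (simp add: t_def)
  have "(\<integral>\<^sup>+x. ennreal ((u x - v x)\<^sup>2) \<partial>M)
      \<le> (\<integral>\<^sup>+x. ennreal (1 + t) * ennreal ((u x)\<^sup>2) + ennreal (1 + 1 / t) * ennreal ((v x)\<^sup>2) \<partial>M)"
  proof (rule nn_integral_mono)
    fix x
    have "ennreal ((u x - v x)\<^sup>2) \<le> ennreal ((1 + t) * (u x)\<^sup>2 + (1 + 1 / t) * (v x)\<^sup>2)"
      using power2_diff_le_weighted[OF t] by (rule ennreal_leI)
    then show "ennreal ((u x - v x)\<^sup>2)
        \<le> ennreal (1 + t) * ennreal ((u x)\<^sup>2) + ennreal (1 + 1 / t) * ennreal ((v x)\<^sup>2)"
      using t by (simp add: ennreal_mult ennreal_plus)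
  qed
  also have "\<dots> = ennreal (1 + t) * (\<integral>\<^sup>+x. ennreal ((u x)\<^sup>2) \<partial>M)
                 + ennreal (1 + 1 / t) * (\<integral>\<^sup>+x. ennreal ((v x)\<^sup>2) \<partial>M)"
    by (simp add: nn_integral_add nn_integral_cmult)
  also have "\<dots> \<le> ennreal (1 + t) * ennreal (a\<^sup>2) + ennreal (1 + 1 / t) * ennreal (b\<^sup>2)"
    by (intro add_mono mult_left_mono u v) auto
  also have "\<dots> = ennreal ((1 + t) * a\<^sup>2 + (1 + 1 / t) * b\<^sup>2)"
    using t by (simp add: ennreal_mult ennreal_plus)
  also have "(1 + t) * a\<^sup>2 + (1 + 1 / t) * b\<^sup>2 = (a + b)\<^sup>2"
    using assms by (simp add: t_def power2_eq_square field_simps)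
  finally show ?thesis .
qed

definition scaled_error :: "('w \<Rightarrow> nat \<Rightarrow> real ^ 'd) \<Rightarrow> nat \<Rightarrow> (real ^ 'd \<Rightarrow> real) \<Rightarrow> 'w \<Rightarrow> real"
  where "scaled_error X n f w = (\<Sum>i<n. f (X w i)) - real n * cube_mean f"

lemma scaled_error_shift:
  assumes "n \<le> n'"
  shows "scaled_error (\<lambda>w i. X w (n + i)) (n' - n) f w = scaled_error X n' f w - scaled_error X n f w"
proof -
  have "(\<Sum>i<n + N. f (X w i)) = (\<Sum>i<n. f (X w i)) + (\<Sum>i<N. f (X w (n + i)))" for N
    by (induction N) auto
  from this[of "n' - n"] show ?thesis
    using assms by (simp add: scaled_error_def of_nat_diff algebra_simps)
qed

lemma rmse_le_ennreal_iff:
  assumes "0 < n" "0 \<le> c"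
    and [measurable]: "f \<in> borel_measurable borel" "\<And>i. (\<lambda>w. X w i) \<in> borel_measurable Q"
  shows "rmse Q X n f \<le> ennreal c
     \<longleftrightarrow> (\<integral>\<^sup>+w. ennreal ((scaled_error X n f w)\<^sup>2) \<partial>Q) \<le> ennreal ((real n * c)\<^sup>2)"
proof -
  let ?E = "\<integral>\<^sup>+w. ennreal ((1 / real n * (\<Sum>i<n. f (X w i)) - cube_mean f)\<^sup>2) \<partial>Q"
  have "(\<integral>\<^sup>+w. ennreal ((scaled_error X n f w)\<^sup>2) \<partial>Q)
      = (\<integral>\<^sup>+w. ennreal ((real n)\<^sup>2) * ennreal ((1 / real n * (\<Sum>i<n. f (X w i)) - cube_mean f)\<^sup>2) \<partial>Q)"
  proof (rule nn_integral_cong)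
    fix w
    have "scaled_error X n f w = real n * (1 / real n * (\<Sum>i<n. f (X w i)) - cube_mean f)"
      using assms(1) by (simp add: scaled_error_def right_diff_distrib)
    then show "ennreal ((scaled_error X n f w)\<^sup>2)
        = ennreal ((real n)\<^sup>2) * ennreal ((1 / real n * (\<Sum>i<n. f (X w i)) - cube_mean f)\<^sup>2)"
      by (simp add: power_mult_distrib ennreal_mult)
  qed
  also have "\<dots> = ennreal ((real n)\<^sup>2) * ?E"
    by (rule nn_integral_cmult) measurable
  finally have "(\<integral>\<^sup>+w. ennreal ((scaled_error X n f w)\<^sup>2) \<partial>Q) \<le> ennreal ((real n * c)\<^sup>2)
      \<longleftrightarrow> ennreal ((real n)\<^sup>2) * ?E \<le> ennreal ((real n)\<^sup>2) * ennreal (c\<^sup>2)"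
    by (simp add: ennreal_mult[symmetric] power_mult_distrib)
  also have "\<dots> \<longleftrightarrow> ?E \<le> ennreal (c\<^sup>2)"
    using assms(1) by (intro ennreal_mult_le_mult_iff) auto
  finally show ?thesis
    using assms(2) by (simp add: rmse_def ennsqrt_le_ennreal_iff)
qed

lemma rmse_shift_le:
  assumes "0 < n" "n < n'" "0 < c" "0 < c'"
    and [measurable]: "f \<in> borel_measurable borel" "\<And>i. (\<lambda>w. X w i) \<in> borel_measurable Q"
    and "rmse Q X n f \<le> ennreal c" "rmse Q X n' f \<le> ennreal c'"
  shows "rmse Q (\<lambda>w i. X w (n + i)) (n' - n) f \<le> ennreal ((real n * c + real n' * c') / real (n' - n))"
proof -
  have N: "0 < real (n' - n)" using assms(2) by simp
  have [measurable]: "scaled_error X k f \<in> borel_measurable Q" for k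
    unfolding scaled_error_def by measurable
  have "(\<integral>\<^sup>+w. ennreal ((scaled_error X n' f w - scaled_error X n f w)\<^sup>2) \<partial>Q)
      \<le> ennreal ((real n' * c' + real n * c)\<^sup>2)"
    using assms rmse_le_ennreal_iff[of n c f X Q] rmse_le_ennreal_iff[of n' c' f X Q]
    by (intro nn_integral_power2_diff_le) auto
  also have "real n' * c' + real n * c = real (n' - n) * ((real n * c + real n' * c') / real (n' - n))"
    using N by simp
  finally show ?thesis
    using assms N scaled_error_shift[of n n' X f] by (subst rmse_le_ennreal_iff) simp_all
qed

lemma worst_rmse_shift_le:
  assumes "0 < n" "n < n'" "0 < c" "0 < c'"
    and "\<And>f. f \<in> F \<Longrightarrow> f \<in> borel_measurable borel" "\<And>i. (\<lambda>w. X w i) \<in> borel_measurable Q"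
    and "worst_rmse Q X n F \<le> ennreal c" "worst_rmse Q X n' F \<le> ennreal c'"
  shows "worst_rmse Q (\<lambda>w i. X w (n + i)) (n' - n) F
           \<le> ennreal ((real n * c + real n' * c') / real (n' - n))"
  unfolding worst_rmse_def
proof (rule SUP_least)
  fix f assume "f \<in> F"
  then have "rmse Q X k f \<le> worst_rmse Q X k F" for k
    unfolding worst_rmse_def by (rule SUP_upper)
  with \<open>f \<in> F\<close> assms show "rmse Q (\<lambda>w i. X w (n + i)) (n' - n) f
      \<le> ennreal ((real n * c + real n' * c') / real (n' - n))"
    by (intro rmse_shift_le) (auto intro: order_trans)
qed

lemma worst_rmse_distr:
  assumes T: "T \<in> measurable P (\<Pi>\<^sub>M i\<in>{..<n}. borel)"
    and F: "\<And>f. f \<in> F \<Longrightarrow> f \<in> borel_measurable borel"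
  shows "worst_rmse (distr P (\<Pi>\<^sub>M i\<in>{..<n}. borel) T) (\<lambda>w. w) n F = worst_rmse P T n F"
  unfolding worst_rmse_def
proof (rule SUP_cong)
  fix f assume "f \<in> F"
  then have [measurable]: "f \<in> borel_measurable borel" by (rule F)
  show "rmse (distr P (\<Pi>\<^sub>M i\<in>{..<n}. borel) T) (\<lambda>w. w) n f = rmse P T n f"
  proof -
    have "(\<lambda>w. ennreal ((1 / real n * (\<Sum>i<n. f (w i)) - cube_mean f)\<^sup>2))
        \<in> borel_measurable (\<Pi>\<^sub>M i\<in>{..<n}. borel)"
      by measurable
    then show ?thesis
      unfolding rmse_def using nn_integral_distr[OF T] by simp
  qed
qed simp

lemma worst_rmse_gt_of_lower_bound:
  assumes lower: "\<And>Q :: (nat \<Rightarrow> real ^ 'd) measure. prob_space Q \<Longrightarrow>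
                    sets Q = sets (\<Pi>\<^sub>M i\<in>{..<n}. borel) \<Longrightarrow>
                    (AE w in Q. \<forall>i<n. w i \<in> unit_cube) \<Longrightarrow> worst_rmse Q (\<lambda>w. w) n F > L"
    and F: "\<And>f. f \<in> F \<Longrightarrow> f \<in> borel_measurable borel"
    and P: "prob_space P" and X: "\<And>i. (\<lambda>w. X w i) \<in> borel_measurable P"
    and X_cube: "AE w in P. \<forall>i<n. X w i \<in> unit_cube"
  shows "worst_rmse P X n F > L"
proof -
  define T where "T w = (\<lambda>i\<in>{..<n}. X w i)" for w
  have T: "T \<in> measurable P (\<Pi>\<^sub>M i\<in>{..<n}. borel)"
    unfolding T_def by (rule measurable_restrict) (rule X)
  let ?Q = "distr P (\<Pi>\<^sub>M i\<in>{..<n}. borel) T"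
  have [measurable]: "unit_cube \<in> sets borel" by (simp add: unit_cube_def)
  have "AE w in ?Q. \<forall>i<n. w i \<in> unit_cube"
    using X_cube by (subst AE_distr_iff[OF T]) (measurable, auto simp: T_def)
  then have "worst_rmse ?Q (\<lambda>w. w) n F > L"
    using P T by (intro lower prob_space.prob_space_distr) auto
  also have "worst_rmse ?Q (\<lambda>w. w) n F = worst_rmse P T n F"
    by (rule worst_rmse_distr[OF T F])
  also have "worst_rmse P T n F = worst_rmse P X n F"
    unfolding worst_rmse_def rmse_def by (simp add: T_def)
  finally show ?thesis .
qed

text \<open>Both sides are homogeneous of degree 1 - \<alpha> in (n, n'); dividing by n powr (1 - \<alpha>)
  leaves only the ratio n' / n.\<close>
lemma homogeneous_powr_inequality_ratio:
  fixes \<alpha> m M n n' :: real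
  assumes "0 < n" "n < n'"
    and gap: "m * (n' - n) powr - \<alpha> < (n * (M * n powr - \<alpha>) + n' * (M * n' powr - \<alpha>)) / (n' - n)"
  shows "m * (n' / n - 1) powr (1 - \<alpha>) < M * (1 + (n' / n) powr (1 - \<alpha>))"
proof -
  define \<rho> where "\<rho> = n' / n"
  have \<rho>: "1 < \<rho>" using assms by (simp add: \<rho>_def)
  have pow: "x * x powr - \<alpha> = x powr (1 - \<alpha>)" if "0 \<le> x" for x :: real
    using powr_mult_base[OF that] by simp
  have "m * (n' - n) powr (1 - \<alpha>) < M * n powr (1 - \<alpha>) + M * n' powr (1 - \<alpha>)"
    using gap assms pow[of "n' - n"] pow[of n] pow[of n']
    by (simp add: pos_less_divide_eq algebra_simps)
  moreover have "(n' - n) powr (1 - \<alpha>) = (\<rho> - 1) powr (1 - \<alpha>) * n powr (1 - \<alpha>)"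
  proof -
    have "n' - n = (\<rho> - 1) * n" using assms by (simp add: \<rho>_def field_simps)
    then show ?thesis using \<rho> assms(1) by (simp add: powr_mult)
  qed
  moreover have "n' powr (1 - \<alpha>) = \<rho> powr (1 - \<alpha>) * n powr (1 - \<alpha>)"
  proof -
    have "n' = \<rho> * n" using assms by (simp add: \<rho>_def)
    then show ?thesis using \<rho> assms(1) by (simp add: powr_mult)
  qed
  ultimately have "(m * (\<rho> - 1) powr (1 - \<alpha>)) * n powr (1 - \<alpha>)
      < (M * (1 + \<rho> powr (1 - \<alpha>))) * n powr (1 - \<alpha>)"
    by (simp add: algebra_simps)
  then show ?thesis
    using assms(1) by (simp add: \<rho>_def)
qed

lemma ratio_ge_of_ratio_inequality:
  fixes \<alpha> m M \<rho> :: real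
  assumes "1 < \<alpha>" "0 < m" "0 < M" "1 < \<rho>"
    and gap: "m * (\<rho> - 1) powr (1 - \<alpha>) < M * (1 + \<rho> powr (1 - \<alpha>))"
  shows "1 + ((m / M) * (1 + \<rho> powr (1 - \<alpha>)) powr (-1)) powr (1 / (\<alpha> - 1)) \<le> \<rho>"
proof -
  define c where "c = (m / M) * (1 + \<rho> powr (1 - \<alpha>)) powr (-1)"
  have S: "0 < 1 + \<rho> powr (1 - \<alpha>)" by (simp add: add_pos_nonneg)
  have c: "c = m / (M * (1 + \<rho> powr (1 - \<alpha>)))" using S by (simp add: c_def powr_neg_one)
  have y: "0 < (\<rho> - 1) powr (\<alpha> - 1)" using assms by simp
  have "m = m * (\<rho> - 1) powr (1 - \<alpha>) * (\<rho> - 1) powr (\<alpha> - 1)"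
    using assms by (simp add: mult.assoc powr_add[symmetric])
  also have "\<dots> < M * (1 + \<rho> powr (1 - \<alpha>)) * (\<rho> - 1) powr (\<alpha> - 1)"
    using gap y by (rule mult_strict_right_mono)
  finally have "c < (\<rho> - 1) powr (\<alpha> - 1)"
    using S assms by (simp add: c divide_less_eq mult_ac)
  then have "c powr (1 / (\<alpha> - 1)) < ((\<rho> - 1) powr (\<alpha> - 1)) powr (1 / (\<alpha> - 1))"
    using S assms by (intro powr_less_mono2) (auto simp: c)
  also have "\<dots> = \<rho> - 1" using assms by (simp add: powr_powr)
  finally show ?thesis by (simp add: c_def)
qed

lemma ratio_bound_ge_uniform:
  fixes \<alpha> m M \<rho> :: real
  assumes "1 < \<alpha>" "0 < m" "0 < M" "1 < \<rho>"
  shows "1 + (m / (2 * M)) powr (1 / (\<alpha> - 1))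
           \<le> 1 + ((m / M) * (1 + \<rho> powr (1 - \<alpha>)) powr (-1)) powr (1 / (\<alpha> - 1))"
proof -
  have S: "0 < 1 + \<rho> powr (1 - \<alpha>)" by (simp add: add_pos_nonneg)
  have "\<rho> powr (1 - \<alpha>) \<le> \<rho> powr 0" using assms by (intro powr_mono) auto
  then have "1 + \<rho> powr (1 - \<alpha>) \<le> 2" using assms by simp
  then have "m / (2 * M) \<le> (m / M) * (1 + \<rho> powr (1 - \<alpha>)) powr (-1)"
    using S assms by (simp add: powr_neg_one divide_left_mono mult_pos_pos)
  then show ?thesis
    using assms by (simp add: powr_mono2)
qed

lemma rmse_bounds_ratio_inequality:
  fixes F :: "(real ^ 'd \<Rightarrow> real) set" and X :: "'w \<Rightarrow> nat \<Rightarrow> real ^ 'd"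
  assumes F: "\<And>f. f \<in> F \<Longrightarrow> f \<in> borel_measurable borel"
    and lower: "\<And>n (Q :: (nat \<Rightarrow> real ^ 'd) measure).
                  n \<ge> 1 \<Longrightarrow> prob_space Q \<Longrightarrow> sets Q = sets (\<Pi>\<^sub>M i\<in>{..<n}. borel) \<Longrightarrow>
                  (AE w in Q. \<forall>i<n. w i \<in> unit_cube) \<Longrightarrow>
                  worst_rmse Q (\<lambda>w. w) n F > ennreal (m * real n powr (-\<alpha>))"
    and P: "prob_space P" and X: "\<And>i. (\<lambda>w. X w i) \<in> borel_measurable P"
    and X_cube: "AE w in P. \<forall>i. X w i \<in> unit_cube"
    and "0 < m" "0 < M" and n: "0 < n" "n < n'"
    and upper: "worst_rmse P X n F \<le> ennreal (M * real n powr (-\<alpha>))"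
      "worst_rmse P X n' F \<le> ennreal (M * real n' powr (-\<alpha>))"
  shows "m * (real n' / real n - 1) powr (1 - \<alpha>) < M * (1 + (real n' / real n) powr (1 - \<alpha>))"
proof -
  let ?tail = "\<lambda>w i. X w (n + i)"
  have "ennreal (m * real (n' - n) powr - \<alpha>) < worst_rmse P ?tail (n' - n) F"
  proof (rule worst_rmse_gt_of_lower_bound[OF _ F P X])
    show "AE w in P. \<forall>i<n' - n. ?tail w i \<in> unit_cube"
      using X_cube by eventually_elim simp
  qed (rule lower, insert n, simp_all)
  also have "worst_rmse P ?tail (n' - n) F
      \<le> ennreal ((real n * (M * real n powr - \<alpha>) + real n' * (M * real n' powr - \<alpha>)) / real (n' - n))"
    using upper by (intro worst_rmse_shift_le n F X) (use \<open>0 < M\<close> n in auto)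
  finally have "m * real (n' - n) powr - \<alpha>
      < (real n * (M * real n powr - \<alpha>) + real n' * (M * real n' powr - \<alpha>)) / real (n' - n)"
    using \<open>0 < m\<close> by (simp add: ennreal_less_iff)
  then show ?thesis
    using n by (intro homogeneous_powr_inequality_ratio) (simp_all add: of_nat_diff)
qed

theorem theorem2:
  fixes F :: "(real ^ 'd \<Rightarrow> real) set"
    and \<alpha> m M :: real
    and P :: "'w measure" and X :: "'w \<Rightarrow> nat \<Rightarrow> real ^ 'd"
    and nseq :: "nat \<Rightarrow> nat"
  assumes F_meas: "\<And>f. f \<in> F \<Longrightarrow> f \<in> borel_measurable borel"
    and F_int: "\<And>f. f \<in> F \<Longrightarrow> set_integrable lborel unit_cube f"
    and alpha: "\<alpha> > 1"
    and mM: "0 < m" "m \<le> M"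
    and lower: "\<And>n (Q :: (nat \<Rightarrow> real ^ 'd) measure).
                  n \<ge> 1 \<Longrightarrow> prob_space Q \<Longrightarrow> sets Q = sets (\<Pi>\<^sub>M i\<in>{..<n}. borel) \<Longrightarrow>
                  (AE w in Q. \<forall>i<n. w i \<in> unit_cube) \<Longrightarrow>
                  worst_rmse Q (\<lambda>w. w) n F > ennreal (m * real n powr (-\<alpha>))"
    and P: "prob_space P"
    and X_meas: "\<And>i. (\<lambda>w. X w i) \<in> borel_measurable P"
    and X_cube: "AE w in P. \<forall>i. X w i \<in> unit_cube"
    and nseq_mono: "strict_mono nseq"
    and nseq_pos: "nseq 0 > 0"
    and upper: "\<And>j. worst_rmse P X (nseq j) F \<le> ennreal (M * real (nseq j) powr (-\<alpha>))"
  shows "\<forall>k. let \<rho> = real (nseq (Suc k)) / real (nseq k) in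
           \<rho> \<ge> 1 + ((m / M) * (1 + \<rho> powr (1 - \<alpha>)) powr (-1)) powr (1 / (\<alpha> - 1))
         \<and> 1 + ((m / M) * (1 + \<rho> powr (1 - \<alpha>)) powr (-1)) powr (1 / (\<alpha> - 1))
             \<ge> 1 + (m / (2 * M)) powr (1 / (\<alpha> - 1))"
proof -
  define \<rho> where "\<rho> k = real (nseq (Suc k)) / real (nseq k)" for k
  have M: "0 < M" using mM by simp
  have n: "0 < nseq k" "nseq k < nseq (Suc k)" for k
    using nseq_pos nseq_mono strict_mono_less_eq[OF nseq_mono, of 0 k]
    by (auto simp: strict_mono_def)
  then have \<rho>: "1 < \<rho> k" for k by (simp add: \<rho>_def)
  have "m * (\<rho> k - 1) powr (1 - \<alpha>) < M * (1 + \<rho> k powr (1 - \<alpha>))" for k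
    unfolding \<rho>_def
    by (rule rmse_bounds_ratio_inequality[OF F_meas lower P X_meas X_cube mM(1) M n upper upper])
  then show ?thesis
    using ratio_ge_of_ratio_inequality[OF alpha mM(1) M \<rho>] ratio_bound_ge_uniform[OF alpha mM(1) M \<rho>]
    unfolding Let_def \<rho>_def[symmetric] by blast
qed

end
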